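(* Consider the linear structural causal model $\mathbf{x}=W\mathbf{x}+\mathbf{e}$ on $n$ variables and fix $i\in[n]$. Let the interventional model be $\mathbf{x}=W^{(i)}\mathbf{x}+\mathbf{e}^{(i)}$, where $W^{(i)}$ is $W$ with its $i$-th row set to zero and $\mathbf{e}^{(i)}$ is $\mathbf{e}$ with its $i$-th component replaced by a new noise $\tilde e_i$ independent of all other components. Then, given the observational distribution of $\mathbf{x}=(I-W)^{-1}\mathbf{e}$ and the interventional distribution of $\mathbf{x}=(I-W^{(i)})^{-1}\mathbf{e}^{(i)}$, the $i$-th row of $W$ can be recovered; consequently the parents of $x_i$ (the indices $j$ with $W_{ij}\neq 0$) and their causal effects $W_{ij}$ are identifiable.
   Context: Standing assumptions: $W\in\mathbb{R}^{n\times n}$ has zero diagonal ($W_{jj}=0$ for all $j$); $I-W$ is invertible; $I-W^{(i)}$ is invertible; the components of $\mathbf{e}$ are jointly independent with at most one Gaussian component, and likewise for $\mathbf{e}^{(i)}$. "Recovered/identifiable" means: any two models satisfying these assumptions that induce the same observational distribution and the same interventional distribution under intervention on $x_i$ have the same $i$-th row of $W$. *)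

theory Defs
  imports "HOL-Probability.Probability"
begin

text \<open>Linear SCM x = W x + e over the index type 'n (variables indexed by 'n, n = CARD('n)).\<close>

definition zero_row :: "real^'n^'n \<Rightarrow> 'n \<Rightarrow> real^'n^'n" where
  "zero_row W i = (\<chi> r c. if r = i then 0 else W $ r $ c)"

definition intervene_noise ::
  "('a \<Rightarrow> real^'n) \<Rightarrow> ('a \<Rightarrow> real) \<Rightarrow> 'n \<Rightarrow> 'a \<Rightarrow> real^'n" where
  "intervene_noise e et i \<omega> = (\<chi> j. if j = i then et \<omega> else e \<omega> $ j)"

definition gaussian_rv :: "'a measure \<Rightarrow> ('a \<Rightarrow> real) \<Rightarrow> bool" where
  "gaussian_rv M X \<longleftrightarrow> (\<exists>\<mu> \<sigma>. 0 < \<sigma> \<and> distributed M lborel X (normal_density \<mu> \<sigma>))"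

definition nondegenerate_rv :: "'a measure \<Rightarrow> ('a \<Rightarrow> real) \<Rightarrow> bool" where
  "nondegenerate_rv M X \<longleftrightarrow> \<not> (\<exists>c. AE \<omega> in M. X \<omega> = c)"

definition admissible_noise :: "'a measure \<Rightarrow> ('a \<Rightarrow> real^'n) \<Rightarrow> bool" where
  "admissible_noise M e \<longleftrightarrow>
     e \<in> borel_measurable M \<and>
     prob_space.indep_vars M (\<lambda>_. borel) (\<lambda>j \<omega>. e \<omega> $ j) UNIV \<and>
     (\<forall>j. nondegenerate_rv M (\<lambda>\<omega>. e \<omega> $ j)) \<and>
     card {j. gaussian_rv M (\<lambda>\<omega>. e \<omega> $ j)} \<le> 1"

definition lsem_model ::
  "'a measure \<Rightarrow> real^'n^'n \<Rightarrow> ('a \<Rightarrow> real^'n) \<Rightarrow> ('a \<Rightarrow> real) \<Rightarrow> 'n \<Rightarrow> bool" where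
  "lsem_model M W e et i \<longleftrightarrow>
     prob_space M \<and>
     (\<forall>j. W $ j $ j = 0) \<and>
     invertible (mat 1 - W) \<and>
     invertible (mat 1 - zero_row W i) \<and>
     et \<in> borel_measurable M \<and>
     admissible_noise M e \<and>
     admissible_noise M (intervene_noise e et i)"

definition obs_distr :: "'a measure \<Rightarrow> real^'n^'n \<Rightarrow> ('a \<Rightarrow> real^'n) \<Rightarrow> (real^'n) measure" where
  "obs_distr M W e = distr M borel (\<lambda>\<omega>. matrix_inv (mat 1 - W) *v e \<omega>)"

definition int_distr ::
  "'a measure \<Rightarrow> real^'n^'n \<Rightarrow> ('a \<Rightarrow> real^'n) \<Rightarrow> ('a \<Rightarrow> real) \<Rightarrow> 'n \<Rightarrow> (real^'n) measure" where
  "int_distr M W e et i =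
     distr M borel (\<lambda>\<omega>. matrix_inv (mat 1 - zero_row W i) *v intervene_noise e et i \<omega>)"

end

theory Submission
  imports Defs
begin

text \<open>
  Write \<open>U = I - W\<close> and \<open>V = I - zero_row W i\<close>. The observational distribution is that of a
  vector \<open>x\<close> for which \<open>U x\<close> has independent non-degenerate coordinates, the interventional one
  that of an \<open>x\<close> for which \<open>V x\<close> does, and \<open>(V x) i = x i\<close>. Let \<open>U'\<close>, \<open>V'\<close> come from a
  second model with the same two distributions.

  The only probabilistic input is: if \<open>X\<close> is non-degenerate and independent of both \<open>E\<close> and
  \<open>c X + E\<close>, then \<open>c = 0\<close>. Indeed the characteristic functions then satisfy
  \<open>\<phi>\<^sub>X(-t) \<phi>\<^sub>X(t) = 1\<close> near \<open>0\<close>, so \<open>|\<phi>\<^sub>X| = 1\<close> there, which confines \<open>X\<close> almost surely to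
  arbitrarily fine lattices.

  Interventional step: \<open>V' x = D (V x)\<close> with \<open>D = V' V\<^sup>-\<^sup>1\<close>, and for \<open>k \<noteq> i\<close> the coordinate
  \<open>(V' x) k\<close> is independent of \<open>x i = (V x) i\<close>, so \<open>D k i = 0\<close>. Observational step: off row \<open>i\<close>
  the matrices \<open>U\<close>, \<open>U'\<close> agree with \<open>V\<close>, \<open>V'\<close>, so for \<open>k \<noteq> i\<close> the coordinate \<open>(U' x) k\<close> is a
  combination of the \<open>(U x) j\<close> with \<open>j \<noteq> i\<close>, hence independent of \<open>(U x) i\<close>; writing
  \<open>U x = C (U' x)\<close> this gives \<open>C i k = 0\<close>. So row \<open>i\<close> of \<open>U\<close> is a multiple of row \<open>i\<close> of \<open>U'\<close>,
  and the unit diagonal makes the factor \<open>1\<close>.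
\<close>

lemma (in prob_space) integral_iexp_add_indep:
  fixes X Y :: "'a \<Rightarrow> real"
  assumes "indep_var borel X borel Y"
  shows "(CLINT \<omega>|M. iexp (a * X \<omega> + b * Y \<omega>)) =
         char (distr M borel X) a * char (distr M borel Y) b"
proof -
  from assms have [measurable]: "random_variable borel X" "random_variable borel Y"
    by (auto elim: indep_var_rv1 indep_var_rv2)
  have "(CLINT \<omega>|M. iexp (a * X \<omega> + b * Y \<omega>)) = (CLINT \<omega>|M. iexp (a * X \<omega>) * iexp (b * Y \<omega>))"
    by (simp add: field_simps exp_add)
  also have "\<dots> = (CLINT \<omega>|M. iexp (a * X \<omega>)) * (CLINT \<omega>|M. iexp (b * Y \<omega>))"
    by (intro indep_var_lebesgue_integral indep_var_compose[unfolded comp_def, OF assms])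
       (auto intro!: integrable_iexp)
  finally show ?thesis
    by (simp add: char_def integral_distr)
qed

lemma (in prob_space) AE_iexp_eq_char_if_norm_eq_1:
  fixes X :: "'a \<Rightarrow> real"
  assumes [measurable]: "random_variable borel X"
    and norm_1: "norm (char (distr M borel X) s) = 1"
  shows "AE \<omega> in M. iexp (s * X \<omega>) = char (distr M borel X) s"
proof -
  define z where "z = char (distr M borel X) s"
  have z_int: "z = (CLINT \<omega>|M. iexp (s * X \<omega>))"
    by (simp add: z_def char_def integral_distr)
  have z_norm: "Re z ^ 2 + Im z ^ 2 = 1"
    using norm_1 by (simp add: z_def[symmetric] cmod_def)
  have int_cos: "integrable M (\<lambda>\<omega>. cos (s * X \<omega>))"
    and int_sin: "integrable M (\<lambda>\<omega>. sin (s * X \<omega>))"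
    by (auto intro!: integrable_const_bound[of _ 1])
  have int_iexp: "integrable M (\<lambda>\<omega>. iexp (s * X \<omega>))"
    by (auto intro!: integrable_iexp)
  have Re_z: "Re z = (\<integral>\<omega>. cos (s * X \<omega>) \<partial>M)" and Im_z: "Im z = (\<integral>\<omega>. sin (s * X \<omega>) \<partial>M)"
    unfolding z_int using integral_Re[OF int_iexp] integral_Im[OF int_iexp]
    by (simp_all add: Re_exp Im_exp)
  define g where "g \<omega> = (cos (s * X \<omega>) - Re z)\<^sup>2 + (sin (s * X \<omega>) - Im z)\<^sup>2" for \<omega>
  \<comment> \<open>\<open>g \<omega> = |iexp (s * X \<omega>) - z|\<^sup>2\<close>, whose expectation is \<open>2 - 2 |z|\<^sup>2 = 0\<close>.\<close>
  have g_eq: "g \<omega> = 2 - 2 * (Re z * cos (s * X \<omega>) + Im z * sin (s * X \<omega>))" for \<omega>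
    using z_norm sin_cos_squared_add[of "s * X \<omega>"]
    unfolding g_def by (simp add: power2_eq_square algebra_simps)
  have "integrable M g"
    unfolding g_eq using int_cos int_sin by auto
  moreover have "integral\<^sup>L M g = 0"
    unfolding g_eq using int_cos int_sin z_norm
    by (simp add: Re_z[symmetric] Im_z[symmetric] prob_space power2_eq_square)
  ultimately have "AE \<omega> in M. g \<omega> = 0"
    by (subst integral_nonneg_eq_0_iff_AE[symmetric]) (auto simp: g_def)
  then show ?thesis
    unfolding z_def[symmetric]
    by eventually_elim (simp add: g_def add_nonneg_eq_0_iff complex_eq_iff Re_exp Im_exp)
qed

lemma iexp_eq_imp_eq:
  assumes "iexp a = iexp b" and "\<bar>a - b\<bar> < 2 * pi"
  shows "a = b"
proof -
  have "exp (\<i> * complex_of_real (a - b)) = 1"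
    using assms(1) by (simp add: algebra_simps exp_diff)
  then obtain k :: int where k: "a - b = of_int (2 * k) * pi"
    by (auto simp: exp_eq_1)
  then have "\<bar>real_of_int k\<bar> < 1"
    using assms(2) by (simp add: abs_mult)
  then have "k = 0"
    by linarith
  then show ?thesis
    using k by simp
qed

lemma (in prob_space) AE_const_if_norm_char_eq_1_near_0:
  fixes X :: "'a \<Rightarrow> real"
  assumes [measurable]: "random_variable borel X"
    and "0 < \<delta>" and norm_1: "\<And>t. \<bar>t\<bar> < \<delta> \<Longrightarrow> norm (char (distr M borel X) t) = 1"
  shows "\<exists>c. AE \<omega> in M. X \<omega> = c"
proof -
  define t where "t n = \<delta> / (real n + 2)" for n :: nat
  have t_pos: "0 < t n" and t_less: "t n < \<delta>" for n
    using \<open>0 < \<delta>\<close> by (simp_all add: t_def field_simps add_pos_nonneg)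
  define S where "S = {x. \<forall>n. iexp (t n * x) = char (distr M borel X) (t n)}"
  have "AE \<omega> in M. iexp (t n * X \<omega>) = char (distr M borel X) (t n)" for n
    using t_pos[of n] t_less[of n] by (intro AE_iexp_eq_char_if_norm_eq_1 norm_1) auto
  then have "AE \<omega> in M. X \<omega> \<in> S"
    by (simp add: S_def AE_all_countable)
  \<comment> \<open>Two points of S differ by a multiple of \<open>2\<pi>/t n\<close> for every n, and \<open>t n \<longrightarrow> 0\<close>.\<close>
  have S_subsingleton: "x = y" if "x \<in> S" "y \<in> S" for x y
  proof -
    obtain n :: nat where n: "\<delta> * \<bar>x - y\<bar> / (2 * pi) < real n"
      using reals_Archimedean2 by blast
    have "\<bar>t n * x - t n * y\<bar> = \<delta> * \<bar>x - y\<bar> / (real n + 2)"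
      using \<open>0 < \<delta>\<close> unfolding t_def right_diff_distrib[symmetric] by (simp add: abs_mult)
    also have "\<dots> < 2 * pi"
    proof -
      have "\<delta> * \<bar>x - y\<bar> < 2 * pi * real n"
        using n by (simp add: field_simps)
      also have "\<dots> < 2 * pi * (real n + 2)"
        by simp
      finally show ?thesis
        by (simp add: field_simps)
    qed
    finally have "t n * x = t n * y"
      using that by (intro iexp_eq_imp_eq) (auto simp: S_def)
    then show "x = y"
      using t_pos[of n] by simp
  qed
  show ?thesis
  proof (cases "S = {}")
    case False
    then obtain x where "x \<in> S"
      by blast
    have "AE \<omega> in M. X \<omega> = x"
      using \<open>AE \<omega> in M. X \<omega> \<in> S\<close> by eventually_elim (use S_subsingleton \<open>x \<in> S\<close> in blast)
    then show ?thesis ..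
  qed (use \<open>AE \<omega> in M. X \<omega> \<in> S\<close> in simp)
qed

lemma (in prob_space) coeff_eq_0_if_indep_mult_add:
  fixes X E :: "'a \<Rightarrow> real"
  assumes indep_E: "indep_var borel X borel E"
    and indep_mix: "indep_var borel X borel (\<lambda>\<omega>. c * X \<omega> + E \<omega>)"
    and nondeg: "nondegenerate_rv M X"
  shows "c = 0"
proof (rule ccontr)
  assume "c \<noteq> 0"
  have [measurable]: "random_variable borel X" "random_variable borel E"
    using indep_E by (auto elim: indep_var_rv1 indep_var_rv2)
  interpret X: real_distribution "distr M borel X" by simp
  interpret E: real_distribution "distr M borel E" by simp
  let ?\<phi>X = "char (distr M borel X)" and ?\<phi>E = "char (distr M borel E)"
  have mult: "?\<phi>X (u + c * v) * ?\<phi>E v = ?\<phi>X u * (?\<phi>X (c * v) * ?\<phi>E v)" for u v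
  proof -
    have "?\<phi>X (u + c * v) * ?\<phi>E v = (CLINT \<omega>|M. iexp ((u + c * v) * X \<omega> + v * E \<omega>))"
      by (rule integral_iexp_add_indep[OF indep_E, symmetric])
    also have "\<dots> = (CLINT \<omega>|M. iexp (u * X \<omega> + v * (c * X \<omega> + E \<omega>)))"
      by (simp add: algebra_simps)
    also have "\<dots> = ?\<phi>X u * char (distr M borel (\<lambda>\<omega>. c * X \<omega> + E \<omega>)) v"
      by (rule integral_iexp_add_indep[OF indep_mix])
    also have "char (distr M borel (\<lambda>\<omega>. c * X \<omega> + E \<omega>)) v =
        (CLINT \<omega>|M. iexp ((c * v) * X \<omega> + v * E \<omega>))"
      by (simp add: char_def integral_distr algebra_simps)
    also have "\<dots> = ?\<phi>X (c * v) * ?\<phi>E v"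
      by (rule integral_iexp_add_indep[OF indep_E])
    finally show ?thesis .
  qed
  obtain \<delta> where "0 < \<delta>" and \<phi>E_nonzero: "\<And>v. \<bar>v\<bar> < \<delta> \<Longrightarrow> ?\<phi>E v \<noteq> 0"
    using continuous_at_avoid[OF E.isCont_char, of 0 0] by (auto simp: E.char_zero dist_real_def)
  \<comment> \<open>With \<open>u = - c v\<close>: \<open>\<phi>\<^sub>X(-cv) \<phi>\<^sub>X(cv) = 1\<close>, and both factors have norm at most 1.\<close>
  have "norm (?\<phi>X t) = 1" if "\<bar>t\<bar> < \<bar>c\<bar> * \<delta>" for t
  proof -
    have "\<bar>t / c\<bar> < \<delta>"
      using that \<open>c \<noteq> 0\<close> by (simp add: field_simps)
    then have "?\<phi>X (- t) * ?\<phi>X t = 1"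
      using mult[of "- t" "t / c"] \<phi>E_nonzero \<open>c \<noteq> 0\<close> by (simp add: X.char_zero)
    then have "norm (?\<phi>X (- t)) * norm (?\<phi>X t) = 1"
      by (metis norm_mult norm_one)
    then show ?thesis
      using X.cmod_char_le_1[of t] X.cmod_char_le_1[of "- t"]
      by (smt (verit) mult_left_le_one_le norm_ge_zero)
  qed
  then have "\<exists>a. AE \<omega> in M. X \<omega> = a"
    using \<open>0 < \<delta>\<close> \<open>c \<noteq> 0\<close> by (intro AE_const_if_norm_char_eq_1_near_0[where \<delta>="\<bar>c\<bar> * \<delta>"]) auto
  then show False
    using nondeg by (simp add: nondegenerate_rv_def)
qed

lemma (in prob_space) indep_var_sum_disjoint:
  fixes Y :: "'i::finite \<Rightarrow> 'a \<Rightarrow> real"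
  assumes indep: "indep_vars (\<lambda>_. borel) Y UNIV" and "A \<inter> B = {}"
  shows "indep_var borel (\<lambda>\<omega>. \<Sum>j\<in>A. a j * Y j \<omega>) borel (\<lambda>\<omega>. \<Sum>j\<in>B. b j * Y j \<omega>)"
proof -
  have "indep_var (PiM A (\<lambda>_. borel)) (\<lambda>\<omega>. restrict (\<lambda>j. Y j \<omega>) A)
                  (PiM B (\<lambda>_. borel)) (\<lambda>\<omega>. restrict (\<lambda>j. Y j \<omega>) B)"
    using indep_var_restrict[OF indep \<open>A \<inter> B = {}\<close>] by simp
  then have "indep_var borel ((\<lambda>f. \<Sum>j\<in>A. a j * f j) \<circ> (\<lambda>\<omega>. restrict (\<lambda>j. Y j \<omega>) A))
                 borel ((\<lambda>f. \<Sum>j\<in>B. b j * f j) \<circ> (\<lambda>\<omega>. restrict (\<lambda>j. Y j \<omega>) B))"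
    by (rule indep_var_compose) measurable
  then show ?thesis
    by (simp add: comp_def cong: sum.cong)
qed

lemma (in prob_space) coeff_eq_0_if_indep_lincomb:
  fixes Y :: "'i::finite \<Rightarrow> 'a \<Rightarrow> real"
  assumes indep: "indep_vars (\<lambda>_. borel) Y UNIV" and "nondegenerate_rv M (Y i)"
    and "indep_var borel (Y i) borel (\<lambda>\<omega>. \<Sum>j\<in>UNIV. d j * Y j \<omega>)"
  shows "d i = 0"
proof (rule coeff_eq_0_if_indep_mult_add)
  show "indep_var borel (Y i) borel (\<lambda>\<omega>. \<Sum>j\<in>UNIV - {i}. d j * Y j \<omega>)"
    using indep_var_sum_disjoint[OF indep, of "{i}" "UNIV - {i}" "\<lambda>_. 1" d] by simp
  show "indep_var borel (Y i) borel (\<lambda>\<omega>. d i * Y i \<omega> + (\<Sum>j\<in>UNIV - {i}. d j * Y j \<omega>))"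
    using assms(3) by (simp add: sum.remove)
qed fact

lemma invertible_matrix_inv:
  fixes A :: "'a::semiring_1^'n^'m"
  assumes "invertible A"
  shows matrix_mul_rinv: "A ** matrix_inv A = mat 1"
    and matrix_mul_linv: "matrix_inv A ** A = mat 1"
  using someI_ex[OF assms[unfolded invertible_def]] by (auto simp: matrix_inv_def)

lemma component_eq_sum_through_inverse:
  fixes A B :: "real^'n^'n"
  assumes "invertible A"
  shows "(B *v v) $ k = (\<Sum>j\<in>UNIV. (B ** matrix_inv A) $ k $ j * (A *v v) $ j)"
proof -
  have "B *v v = (B ** matrix_inv A) *v (A *v v)"
    by (simp add: matrix_vector_mul_assoc flip: matrix_mul_assoc add: matrix_mul_linv[OF assms])
  then show ?thesis
    by (simp add: matrix_vector_mult_def)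
qed

definition demixes :: "real^'n^'n \<Rightarrow> (real^'n) measure \<Rightarrow> bool" where
  "demixes A P \<longleftrightarrow>
     prob_space P \<and>
     prob_space.indep_vars P (\<lambda>_. borel) (\<lambda>j v. (A *v v) $ j) UNIV \<and>
     (\<forall>j. nondegenerate_rv P (\<lambda>v. (A *v v) $ j))"

lemma indep_vars_distr:
  fixes h :: "'a \<Rightarrow> 'b" and Y :: "'i \<Rightarrow> 'b \<Rightarrow> real"
  assumes "prob_space M" and [measurable]: "h \<in> measurable M N" "\<And>j. Y j \<in> borel_measurable N"
    and indep: "prob_space.indep_vars M (\<lambda>_. borel) (\<lambda>j \<omega>. Y j (h \<omega>)) UNIV"
  shows "prob_space.indep_vars (distr M N h) (\<lambda>_. borel) Y UNIV"
proof -
  interpret M: prob_space M by fact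
  interpret N: prob_space "distr M N h" by (rule M.prob_space_distr) simp
  have "distr (distr M N h) (PiM UNIV (\<lambda>_. borel)) (\<lambda>x. \<lambda>j\<in>UNIV. Y j x) =
      distr M (PiM UNIV (\<lambda>_. borel)) (\<lambda>\<omega>. \<lambda>j\<in>UNIV. Y j (h \<omega>))"
    by (subst distr_distr) (auto simp: comp_def)
  also have "\<dots> = PiM UNIV (\<lambda>j. distr M borel (\<lambda>\<omega>. Y j (h \<omega>)))"
    using indep by (subst (asm) M.indep_vars_iff_distr_eq_PiM) auto
  also have "\<dots> = PiM UNIV (\<lambda>j. distr (distr M N h) borel (Y j))"
    by (subst distr_distr) (auto simp: comp_def)
  finally show ?thesis
    by (subst N.indep_vars_iff_distr_eq_PiM) auto
qed

lemma nondegenerate_rv_distr: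
  assumes [measurable]: "h \<in> measurable M N" "Y \<in> borel_measurable N"
    and "nondegenerate_rv M (\<lambda>\<omega>. Y (h \<omega>))"
  shows "nondegenerate_rv (distr M N h) Y"
  using assms(3) by (simp add: nondegenerate_rv_def AE_distr_iff)

lemma borel_measurable_matrix_vector_mult [measurable]:
  "(*v) (A :: real^'n^'m) \<in> borel_measurable borel"
  by (intro borel_measurable_continuous_onI matrix_vector_mult_linear_continuous_on)

lemma borel_measurable_matrix_vector_mult_nth [measurable]:
  "(\<lambda>v. (A *v v) $ j) \<in> borel_measurable borel" for A :: "real^'n^'m"
  unfolding matrix_vector_mult_def
  by (intro borel_measurable_continuous_onI) (simp add: continuous_intros)

lemma demixes_distr_matrix_inv:
  fixes L :: "real^'n^'n" and e :: "'a \<Rightarrow> real^'n"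
  assumes "prob_space M" and noise: "admissible_noise M e" and "invertible L"
  shows "demixes L (distr M borel (\<lambda>\<omega>. matrix_inv L *v e \<omega>))"
proof -
  have [measurable]: "e \<in> borel_measurable M"
    using noise by (simp add: admissible_noise_def)
  have L_inv: "L *v (matrix_inv L *v x) = x" for x
    by (simp add: matrix_vector_mul_assoc matrix_mul_rinv[OF \<open>invertible L\<close>])
  show ?thesis
    unfolding demixes_def using noise \<open>prob_space M\<close>
    by (auto simp: L_inv admissible_noise_def prob_space.prob_space_distr
        intro!: indep_vars_distr nondegenerate_rv_distr)
qed

lemma lsem_model_demixes:
  assumes "lsem_model M W e et i"
  shows "demixes (mat 1 - W) (obs_distr M W e)"
    and "demixes (mat 1 - zero_row W i) (int_distr M W e et i)"
  using assms demixes_distr_matrix_inv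
  by (auto simp: lsem_model_def obs_distr_def int_distr_def)

lemma demixing_entry_eq_0_if_indep:
  fixes A B :: "real^'n::finite^'n"
  assumes demix: "demixes A P" and "invertible A"
    and indep: "prob_space.indep_var P borel (\<lambda>v. (A *v v) $ i) borel (\<lambda>v. (B *v v) $ k)"
  shows "(B ** matrix_inv A) $ k $ i = 0"
proof -
  interpret prob_space P
    using demix by (simp add: demixes_def)
  have "(\<lambda>v. (B *v v) $ k) = (\<lambda>v. \<Sum>j\<in>UNIV. (B ** matrix_inv A) $ k $ j * (A *v v) $ j)"
    using component_eq_sum_through_inverse[OF \<open>invertible A\<close>] by blast
  with indep have "indep_var borel (\<lambda>v. (A *v v) $ i)
      borel (\<lambda>v. \<Sum>j\<in>UNIV. (B ** matrix_inv A) $ k $ j * (A *v v) $ j)"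
    by simp
  then show ?thesis
    using demix by (intro coeff_eq_0_if_indep_lincomb) (auto simp: demixes_def)
qed

lemma demixing_entry_eq_0_if_rows_eq:
  fixes A B :: "real^'n::finite^'n"
  assumes "demixes A P" and demix_B: "demixes B P" and "invertible A"
    and "A $ i = B $ i" and "k \<noteq> i"
  shows "(B ** matrix_inv A) $ k $ i = 0"
proof (rule demixing_entry_eq_0_if_indep[OF \<open>demixes A P\<close> \<open>invertible A\<close>])
  interpret prob_space P
    using demix_B by (simp add: demixes_def)
  have "indep_var borel (\<lambda>v. (B *v v) $ i) borel (\<lambda>v. (B *v v) $ k)"
    using demix_B \<open>k \<noteq> i\<close> indep_var_sum_disjoint[of "\<lambda>j v. (B *v v) $ j" "{i}" "{k}" "\<lambda>_. 1" "\<lambda>_. 1"]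
    by (simp add: demixes_def)
  then show "indep_var borel (\<lambda>v. (A *v v) $ i) borel (\<lambda>v. (B *v v) $ k)"
    using \<open>A $ i = B $ i\<close> by (simp add: matrix_vector_mult_def)
qed

lemma demixing_entry_eq_0_if_row_avoids:
  fixes A B :: "real^'n::finite^'n"
  assumes demix_A: "demixes A P" and "demixes B P" and "invertible B"
    and B_row: "\<And>v. (B *v v) $ k = (\<Sum>j\<in>UNIV - {i}. d j * (A *v v) $ j)"
  shows "(A ** matrix_inv B) $ i $ k = 0"
proof (rule demixing_entry_eq_0_if_indep[OF \<open>demixes B P\<close> \<open>invertible B\<close>])
  interpret prob_space P
    using demix_A by (simp add: demixes_def)
  show "indep_var borel (\<lambda>v. (B *v v) $ k) borel (\<lambda>v. (A *v v) $ i)"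
    using demix_A indep_var_sum_disjoint[of "\<lambda>j v. (A *v v) $ j" "UNIV - {i}" "{i}" d "\<lambda>_. 1"]
    by (simp add: demixes_def B_row)
qed

lemma component_eq_sum_off_row:
  fixes A A' B B' :: "real^'n::finite^'n"
  assumes "invertible A'" and D_ki: "(B' ** matrix_inv A') $ k $ i = 0"
    and "B $ k = B' $ k" and "\<And>j. j \<noteq> i \<Longrightarrow> A $ j = A' $ j"
  shows "(B *v v) $ k = (\<Sum>j\<in>UNIV - {i}. (B' ** matrix_inv A') $ k $ j * (A *v v) $ j)"
proof -
  have "(B *v v) $ k = (B' *v v) $ k"
    using \<open>B $ k = B' $ k\<close> by (simp add: matrix_vector_mult_def)
  also have "\<dots> = (\<Sum>j\<in>UNIV. (B' ** matrix_inv A') $ k $ j * (A' *v v) $ j)"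
    by (rule component_eq_sum_through_inverse[OF \<open>invertible A'\<close>])
  also have "\<dots> = (\<Sum>j\<in>UNIV - {i}. (B' ** matrix_inv A') $ k $ j * (A' *v v) $ j)"
    using D_ki by (simp add: sum.remove[of UNIV i])
  also have "\<dots> = (\<Sum>j\<in>UNIV - {i}. (B' ** matrix_inv A') $ k $ j * (A *v v) $ j)"
    using assms(4) by (intro sum.cong) (auto simp: matrix_vector_mult_def)
  finally show ?thesis .
qed

lemma row_eq_if_offdiagonal_eq_0:
  fixes A B :: "real^'n::finite^'n"
  assumes "invertible B" and offdiag: "\<And>k. k \<noteq> i \<Longrightarrow> (A ** matrix_inv B) $ i $ k = 0"
    and "A $ i $ i = 1" and "B $ i $ i = 1"
  shows "A $ i = B $ i"
proof -
  have column: "(M *v axis c 1) $ r = M $ r $ c" for M :: "real^'n^'n" and r c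
    by (metis cart_eq_inner_axis matrix_vector_mul_component)
  have row: "A $ i $ c = (A ** matrix_inv B) $ i $ i * B $ i $ c" for c
  proof -
    have "A $ i $ c = (A *v axis c 1) $ i"
      by (simp add: column)
    also have "\<dots> = (\<Sum>k\<in>UNIV. (A ** matrix_inv B) $ i $ k * (B *v axis c 1) $ k)"
      by (rule component_eq_sum_through_inverse[OF \<open>invertible B\<close>])
    also have "\<dots> = (A ** matrix_inv B) $ i $ i * (B *v axis c 1) $ i"
      using offdiag by (subst sum.remove[of _ i]) (auto intro!: sum.neutral)
    finally show ?thesis
      by (simp add: column)
  qed
  then have "(A ** matrix_inv B) $ i $ i = 1"
    using row[of i] \<open>A $ i $ i = 1\<close> \<open>B $ i $ i = 1\<close> by simp
  then show ?thesis
    using row by (simp add: vec_eq_iff)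
qed

lemma zero_row_nth: "zero_row W i $ j = (if j = i then 0 else W $ j)"
  by (simp add: zero_row_def vec_eq_iff)

theorem proposition1:
  fixes i :: "'n::finite"
    and M :: "'a measure" and W :: "real^'n^'n" and e :: "'a \<Rightarrow> real^'n" and et :: "'a \<Rightarrow> real"
    and M' :: "'b measure" and W' :: "real^'n^'n" and e' :: "'b \<Rightarrow> real^'n" and et' :: "'b \<Rightarrow> real"
  assumes "lsem_model M W e et i"
    and "lsem_model M' W' e' et' i"
    and "obs_distr M W e = obs_distr M' W' e'"
    and "int_distr M W e et i = int_distr M' W' e' et' i"
  shows "W $ i = W' $ i \<and> {j. W $ i $ j \<noteq> 0} = {j. W' $ i $ j \<noteq> 0}"
proof -
  let ?U = "mat 1 - W" and ?U' = "mat 1 - W'"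
  let ?V = "mat 1 - zero_row W i" and ?V' = "mat 1 - zero_row W' i"
  note demix = lsem_model_demixes[OF assms(1)] lsem_model_demixes[OF assms(2), folded assms(3,4)]
  have "invertible ?V" "invertible ?U'" "\<forall>j. W $ j $ j = 0" "\<forall>j. W' $ j $ j = 0"
    using assms(1,2) by (simp_all add: lsem_model_def)
  have D_col: "(?V' ** matrix_inv ?V) $ k $ i = 0" if "k \<noteq> i" for k
    by (rule demixing_entry_eq_0_if_rows_eq[OF demix(2,4) \<open>invertible ?V\<close> _ that])
      (simp add: zero_row_nth)
  have "(?U ** matrix_inv ?U') $ i $ k = 0" if "k \<noteq> i" for k
    using demix(1,3) \<open>invertible ?U'\<close>
  proof (rule demixing_entry_eq_0_if_row_avoids)
    show "(?U' *v v) $ k = (\<Sum>j\<in>UNIV - {i}. (?V' ** matrix_inv ?V) $ k $ j * (?U *v v) $ j)" for v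
      using \<open>invertible ?V\<close> D_col[OF that]
      by (rule component_eq_sum_off_row) (simp_all add: zero_row_nth that)
  qed
  then have "?U $ i = ?U' $ i"
    using \<open>invertible ?U'\<close> \<open>\<forall>j. W $ j $ j = 0\<close> \<open>\<forall>j. W' $ j $ j = 0\<close>
    by (intro row_eq_if_offdiagonal_eq_0) (simp_all add: mat_def)
  then show ?thesis
    by (simp add: vec_eq_iff)
qed

end
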